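(* For every integer $n\ge 1$, the polytope \[\mathrm{Newt}(U_n)=\sum_{1\le i<j\le n}\mathrm{conv}\{e_i+e_{n+j},\,e_j+e_{n+i}\}\subseteq\mathbb{R}^{2n}\] is unimodularly equivalent to the permutohedron $\Pi_n$.
   Context: Here $e_1,\dots,e_{2n}$ are the standard basis vectors of $\mathbb{R}^{2n}$ and the sum is a Minkowski sum; this is the sum of the Newton polytopes of the binomials $t_it_{n+j}-t_jt_{n+i}$, $1\le i<j\le n$ (the Newton polytope of a polynomial being the convex hull of its exponent vectors). The permutohedron is $\Pi_n=\mathrm{conv}\{(\pi_1,\dots,\pi_n): \pi\in\mathfrak{S}_n\}\subseteq\mathbb{R}^n$. Two polytopes $P,P'\subseteq\mathbb{R}^m$ are unimodularly equivalent if $P'=\{Mx+v: x\in P\}$ for some $M\in \mathrm{GL}_m(\mathbb{Z})$ and $v\in\mathbb{Z}^m$; if $P\subseteq\mathbb{R}^N$ and $P'\subseteq\mathbb{R}^m$ with $N>m$, they are called unimodularly equivalent if $P$ is unimodularly equivalent to $P'\times\{0\}\subseteq\mathbb{R}^N$. *)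

theory Defs
  imports "HOL-Analysis.Analysis"
begin

definition minkowski_sum :: "'i set \<Rightarrow> ('i \<Rightarrow> 'a::comm_monoid_add set) \<Rightarrow> 'a set" where
  "minkowski_sum I A = {(\<Sum>k\<in>I. f k) | f. \<forall>k\<in>I. f k \<in> A k}"

text \<open>R^{2n} is modelled as real^('n + 'n): coordinate Inl i is coordinate i,
  coordinate Inr i is coordinate n+i.\<close>
definition newt_U :: "(real ^ ('n::{finite,linorder} + 'n)) set" where
  "newt_U = minkowski_sum {(i,j). i < j}
     (\<lambda>(i,j). convex hull {axis (Inl i) 1 + axis (Inr j) 1, axis (Inl j) 1 + axis (Inr i) 1})"

definition permutohedron :: "(real ^ ('n::finite)) set" where
  "permutohedron = convex hull {x. \<exists>p. bij_betw p (UNIV::'n set) {1..CARD('n)} \<and>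
                                        x = (\<chi> i. real (p i))}"

definition unimod_equiv :: "(real ^ 'm::finite) set \<Rightarrow> (real ^ 'm) set \<Rightarrow> bool" where
  "unimod_equiv P Q \<longleftrightarrow> (\<exists>(M::int^'m^'m) (M'::int^'m^'m) (v::int^'m).
      M ** M' = mat 1 \<and> M' ** M = mat 1 \<and>
      Q = (\<lambda>x. (\<chi> i j. real_of_int (M $ i $ j)) *v x + (\<chi> i. real_of_int (v $ i))) ` P)"

definition pad_zero :: "real ^ 'n::finite \<Rightarrow> real ^ ('n + 'n)" where
  "pad_zero x = (\<chi> k. case k of Inl i \<Rightarrow> x $ i | Inr _ \<Rightarrow> 0)"

end

theory Submission
  imports Defs
begin

(* The unimodular affine map (x, 0) \<mapsto> (x - 1, n - x) sends the vertex sigma of the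
   permutohedron to newt_vertex sigma, the point of Newt(U_n) obtained by choosing, for every
   pair i < j, the endpoint e_i + e_{n+j} if sigma j < sigma i and e_j + e_{n+i} otherwise:
   its coordinate i counts the j ranked below i, i.e. equals sigma i - 1.  So the image of
   the permutohedron is the convex hull of these points, which lies in the convex set
   Newt(U_n).  Conversely, a linear functional a is maximised on the segment of the pair
   {i, j} at the endpoint favouring the index with larger weight a_i - a_{n+i}; a ranking
   sigma compatible with these weights maximises all segments at once, so no functional
   separates a point of Newt(U_n) from the hull of the vertices. *)

lemma convex_minkowski_sum:
  fixes A :: "'i \<Rightarrow> 'a::real_vector set"
  assumes "\<And>k. k \<in> I \<Longrightarrow> convex (A k)"
  shows "convex (minkowski_sum I A)"
  unfolding convex_def minkowski_sum_def
proof clarify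
  fix f g :: "'i \<Rightarrow> 'a" and u v :: real
  assume f: "\<forall>k\<in>I. f k \<in> A k" and g: "\<forall>k\<in>I. g k \<in> A k" and uv: "0 \<le> u" "0 \<le> v" "u + v = 1"
  show "\<exists>h. u *\<^sub>R sum f I + v *\<^sub>R sum g I = sum h I \<and> (\<forall>k\<in>I. h k \<in> A k)"
  proof (intro exI conjI ballI)
    show "u *\<^sub>R sum f I + v *\<^sub>R sum g I = (\<Sum>k\<in>I. u *\<^sub>R f k + v *\<^sub>R g k)"
      by (simp add: scaleR_sum_right sum.distrib)
    show "u *\<^sub>R f k + v *\<^sub>R g k \<in> A k" if "k \<in> I" for k
      using assms[OF that] f g uv that unfolding convex_def by blast
  qed
qed

lemma mem_convex_hull_if_inner_dominated:
  fixes z :: "'a::euclidean_space"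
  assumes "finite V" and dominated: "\<And>a. \<exists>v\<in>V. a \<bullet> z \<le> a \<bullet> v"
  shows "z \<in> convex hull V"
proof (rule ccontr)
  assume "z \<notin> convex hull V"
  moreover have "closed (convex hull V)"
    using \<open>finite V\<close> by (simp add: compact_imp_closed finite_imp_compact_convex_hull)
  ultimately obtain a b where "a \<bullet> z < b" and "\<forall>x\<in>convex hull V. b < a \<bullet> x"
    using separating_hyperplane_closed_point[OF convex_convex_hull] by blast
  moreover obtain v where "v \<in> V" "(- a) \<bullet> z \<le> (- a) \<bullet> v"
    using dominated by blast
  ultimately have "b < a \<bullet> v" "a \<bullet> v \<le> a \<bullet> z"
    using hull_inc[of v V] by auto
  with \<open>a \<bullet> z < b\<close> show False
    by linarith
qed

lemma convex_hull_affine_matrix_image: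
  fixes M :: "real ^ 'n ^ 'm"
  shows "(\<lambda>x. M *v x + c) ` (convex hull S) = convex hull ((\<lambda>x. M *v x + c) ` S)"
proof -
  have decompose: "(\<lambda>x. M *v x + c) ` X = (\<lambda>y. c + y) ` (\<lambda>x. M *v x) ` X" for X
    by (simp add: image_image add.commute)
  show ?thesis
    unfolding decompose convex_hull_translation convex_hull_linear_image[OF matrix_vector_mul_linear]
    by simp
qed

lemma ex_rank_strict_linear_order:
  fixes r :: "'a::finite rel"
  assumes r: "strict_linear_order r"
  shows "\<exists>\<sigma>. bij_betw \<sigma> UNIV {1..CARD('a)} \<and> (\<forall>i j. (i, j) \<in> r \<longrightarrow> \<sigma> i < \<sigma> j)"
proof -
  have trans: "trans r" and irrefl: "irrefl r" and total: "total r"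
    using r by (auto simp: strict_linear_order_on_def)
  define \<sigma> where "\<sigma> k = Suc (card {j. (j, k) \<in> r})" for k
  have mono: "\<sigma> i < \<sigma> j" if "(i, j) \<in> r" for i j
  proof -
    have "{x. (x, i) \<in> r} \<subset> {x. (x, j) \<in> r}"
      using that trans irrefl by (auto dest: transD simp: irrefl_def)
    then show ?thesis
      unfolding \<sigma>_def by (simp add: psubset_card_mono)
  qed
  have "inj \<sigma>"
  proof (rule injI)
    fix i j assume "\<sigma> i = \<sigma> j"
    then show "i = j"
      using total mono unfolding total_on_def by (metis less_irrefl UNIV_I)
  qed
  moreover have range: "range \<sigma> \<subseteq> {1..CARD('a)}"
  proof clarify
    fix k
    have "{j. (j, k) \<in> r} \<subseteq> UNIV - {k}"
      using irrefl by (auto simp: irrefl_def)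
    then have "card {j. (j, k) \<in> r} \<le> CARD('a) - 1"
      using card_mono[of "UNIV - {k}"] by (simp add: card_Diff_singleton)
    then have "card {j. (j, k) \<in> r} < CARD('a)"
      using zero_less_card_finite[where 'a='a] by linarith
    then show "\<sigma> k \<in> {1..CARD('a)}"
      unfolding \<sigma>_def by simp
  qed
  moreover have "range \<sigma> = {1..CARD('a)}"
    using range card_image[OF \<open>inj \<sigma>\<close>] by (intro card_subset_eq) auto
  ultimately have "bij_betw \<sigma> UNIV {1..CARD('a)}"
    by (simp add: bij_betw_def)
  then show ?thesis
    using mono by blast
qed

lemma ex_rank_mono:
  fixes w :: "'a::{finite,linorder} \<Rightarrow> 'b::linorder"
  shows "\<exists>\<sigma>. bij_betw \<sigma> UNIV {1..CARD('a)} \<and> (\<forall>i j. w i < w j \<longrightarrow> \<sigma> i < \<sigma> j)"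
proof -
  let ?r = "{(i, j). w i < w j \<or> w i = w j \<and> i < j}"
  have "strict_linear_order ?r"
    by (auto simp: strict_linear_order_on_def trans_def irrefl_def total_on_def)
  then obtain \<sigma> where "bij_betw \<sigma> UNIV {1..CARD('a)}" "\<forall>i j. (i, j) \<in> ?r \<longrightarrow> \<sigma> i < \<sigma> j"
    using ex_rank_strict_linear_order by blast
  then show ?thesis
    by auto
qed

lemma card_less_bij_betw:
  assumes "bij_betw \<sigma> UNIV {1..CARD('a::finite)}"
  shows "card {j. \<sigma> j < \<sigma> k} = \<sigma> k - 1"
    and "card {j. \<sigma> k < \<sigma> j} = CARD('a) - \<sigma> k"
proof -
  have inj: "inj \<sigma>" and range: "range \<sigma> = {1..CARD('a)}"
    using assms by (auto simp: bij_betw_def)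
  then have bounds: "1 \<le> \<sigma> j" "\<sigma> j \<le> CARD('a)" for j
    by auto
  have "{j. \<sigma> j < \<sigma> k} = \<sigma> -` {1..<\<sigma> k}"
    using bounds by auto
  moreover have "{1..<\<sigma> k} \<subseteq> range \<sigma>"
    using bounds[of k] by (auto simp: range)
  ultimately show "card {j. \<sigma> j < \<sigma> k} = \<sigma> k - 1"
    using inj by (simp add: card_vimage_inj)
  have "{j. \<sigma> k < \<sigma> j} = \<sigma> -` {\<sigma> k<..CARD('a)}"
    using bounds by auto
  moreover have "{\<sigma> k<..CARD('a)} \<subseteq> range \<sigma>"
    using bounds[of k] by (auto simp: range)
  ultimately show "card {j. \<sigma> k < \<sigma> j} = CARD('a) - \<sigma> k"
    using inj by (simp add: card_vimage_inj)
qed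

lemma sum_less_pairs_add_swap:
  fixes G :: "'a::{finite,linorder} \<Rightarrow> 'a \<Rightarrow> 'b::comm_monoid_add"
  assumes diag: "\<And>i. G i i = 0"
  shows "(\<Sum>(i, j)\<in>{(i, j). i < j}. G i j + G j i) = (\<Sum>i\<in>UNIV. \<Sum>j\<in>UNIV. G i j)"
proof -
  have swap: "(\<Sum>(i, j)\<in>{(i, j). i < j}. G j i) = (\<Sum>(i, j)\<in>{(i, j). j < i}. G i j)"
    by (rule sum.reindex_bij_witness[of _ prod.swap prod.swap]) auto
  have "(\<Sum>(i, j)\<in>{(i, j). i < j}. G i j + G j i)
      = (\<Sum>(i, j)\<in>{(i, j). i < j}. G i j) + (\<Sum>(i, j)\<in>{(i, j). j < i}. G i j)"
    unfolding swap[symmetric] by (simp add: split_def sum.distrib)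
  also have "\<dots> = (\<Sum>(i, j)\<in>{(i, j). i < j} \<union> {(i, j). j < i}. G i j)"
    by (intro sum.union_disjoint[symmetric]) auto
  also have "\<dots> = (\<Sum>(i, j)\<in>UNIV. G i j)"
    using diag by (intro sum.mono_neutral_left) (auto, metis antisym_conv3)
  finally show ?thesis
    by (simp add: sum.cartesian_product)
qed

definition newt_vertex :: "('n::{finite,linorder} \<Rightarrow> nat) \<Rightarrow> real ^ ('n + 'n)" where
  "newt_vertex \<sigma> = (\<Sum>(i, j)\<in>{(i, j). i < j}.
     if \<sigma> j < \<sigma> i then axis (Inl i) 1 + axis (Inr j) 1 else axis (Inl j) 1 + axis (Inr i) 1)"

lemma newt_vertex_eq:
  fixes \<sigma> :: "'n::{finite,linorder} \<Rightarrow> nat"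
  assumes bij: "bij_betw \<sigma> UNIV {1..CARD('n)}"
  shows "newt_vertex \<sigma> =
    (\<chi> k. case k of Inl i \<Rightarrow> real (\<sigma> i) - 1 | Inr i \<Rightarrow> real CARD('n) - real (\<sigma> i))"
proof -
  have inj: "inj \<sigma>" and range: "range \<sigma> = {1..CARD('n)}"
    using bij by (auto simp: bij_betw_def)
  define G :: "'n \<Rightarrow> 'n \<Rightarrow> real ^ ('n + 'n)"
    where "G i j = (if \<sigma> j < \<sigma> i then axis (Inl i) 1 + axis (Inr j) 1 else 0)" for i j
  have "newt_vertex \<sigma> = (\<Sum>(i, j)\<in>{(i, j). i < j}. G i j + G j i)"
    unfolding newt_vertex_def G_def using inj
    by (intro sum.cong) (auto simp: inj_eq neq_iff dest: inj_onD)
  also have "\<dots> = (\<Sum>i\<in>UNIV. \<Sum>j\<in>UNIV. G i j)"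
    by (rule sum_less_pairs_add_swap) (simp add: G_def)
  finally have vertex: "newt_vertex \<sigma> = (\<Sum>i\<in>UNIV. \<Sum>j\<in>UNIV. G i j)" .
  have coord: "G i j $ Inl k = of_bool (\<sigma> j < \<sigma> i \<and> i = k)"
    "G i j $ Inr k = of_bool (\<sigma> j < \<sigma> i \<and> j = k)" for i j k
    by (auto simp: G_def axis_def)
  have "newt_vertex \<sigma> $ Inl k = real (card {j. \<sigma> j < \<sigma> k})" for k
    by (simp add: vertex coord of_bool_conj flip: sum_distrib_right)
  moreover have "newt_vertex \<sigma> $ Inr k = real (card {i. \<sigma> k < \<sigma> i})" for k
    unfolding vertex sum_component coord
    by (subst sum.swap) (simp add: of_bool_conj flip: sum_distrib_right)
  moreover have "1 \<le> \<sigma> k" "\<sigma> k \<le> CARD('n)" for k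
    using range by auto
  ultimately show ?thesis
    by (auto simp: vec_eq_iff card_less_bij_betw[OF bij] of_nat_diff split: sum.split)
qed

lemma newt_vertex_mem_newt_U: "newt_vertex \<sigma> \<in> newt_U"
  unfolding newt_U_def minkowski_sum_def newt_vertex_def
  by (rule CollectI, rule exI[of _ "\<lambda>(i, j). if \<sigma> j < \<sigma> i
      then axis (Inl i) 1 + axis (Inr j) 1 else axis (Inl j) 1 + axis (Inr i) 1"])
    (auto intro: hull_inc)

lemma convex_newt_U: "convex newt_U"
  unfolding newt_U_def by (rule convex_minkowski_sum) (auto simp: convex_convex_hull)

lemma newt_U_inner_le_vertex:
  fixes z :: "real ^ ('n::{finite,linorder} + 'n)"
  assumes "z \<in> newt_U"
  shows "\<exists>\<sigma>. bij_betw \<sigma> UNIV {1..CARD('n)} \<and> a \<bullet> z \<le> a \<bullet> newt_vertex \<sigma>"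
proof -
  define P Q :: "'n \<Rightarrow> 'n \<Rightarrow> real ^ ('n + 'n)"
    where "P i j = axis (Inl i) 1 + axis (Inr j) 1" and "Q i j = axis (Inl j) 1 + axis (Inr i) 1"
    for i j
  define w where "w k = a $ Inl k - a $ Inr k" for k
  obtain \<sigma> where bij: "bij_betw \<sigma> UNIV {1..CARD('n)}"
    and mono: "\<And>i j. w i < w j \<Longrightarrow> \<sigma> i < \<sigma> j"
    using ex_rank_mono[of w] by blast
  obtain f where z: "z = (\<Sum>p\<in>{(i, j). i < j}. f p)"
    and f: "\<And>i j. i < j \<Longrightarrow> f (i, j) \<in> convex hull {P i j, Q i j}"
    using assms unfolding newt_U_def minkowski_sum_def P_def Q_def by blast
  have "a \<bullet> f (i, j) \<le> a \<bullet> (if \<sigma> j < \<sigma> i then P i j else Q i j)" if "i < j" for i j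
  proof -
    have "a \<bullet> P i j - a \<bullet> Q i j = w i - w j"
      by (simp add: P_def Q_def w_def inner_add_right inner_axis)
    moreover have "\<sigma> j < \<sigma> i \<Longrightarrow> w j \<le> w i" "\<not> \<sigma> j < \<sigma> i \<Longrightarrow> w i \<le> w j"
      using mono[of i j] mono[of j i] by (auto simp: not_less[symmetric])
    ultimately have "{P i j, Q i j} \<subseteq> {x. a \<bullet> x \<le> a \<bullet> (if \<sigma> j < \<sigma> i then P i j else Q i j)}"
      by auto
    then have "convex hull {P i j, Q i j} \<subseteq> {x. a \<bullet> x \<le> a \<bullet> (if \<sigma> j < \<sigma> i then P i j else Q i j)}"
      by (intro hull_minimal convex_halfspace_le)
    with f[OF that] show ?thesis
      by blast
  qed
  then have "a \<bullet> z \<le> a \<bullet> (\<Sum>(i, j)\<in>{(i, j). i < j}. if \<sigma> j < \<sigma> i then P i j else Q i j)"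
    unfolding z inner_sum_right by (intro sum_mono) auto
  then show ?thesis
    using bij unfolding newt_vertex_def P_def Q_def by blast
qed

lemma newt_U_eq_convex_hull_vertices:
  "newt_U = convex hull (newt_vertex ` {\<sigma> :: 'n::{finite,linorder} \<Rightarrow> nat. bij_betw \<sigma> UNIV {1..CARD('n)}})"
proof
  show "convex hull (newt_vertex ` {\<sigma> :: 'n \<Rightarrow> nat. bij_betw \<sigma> UNIV {1..CARD('n)}}) \<subseteq> newt_U"
    by (intro hull_minimal convex_newt_U) (auto simp: newt_vertex_mem_newt_U)
  have finite: "finite {\<sigma> :: 'n \<Rightarrow> nat. bij_betw \<sigma> UNIV {1..CARD('n)}}"
    by (rule finite_subset[OF _ finite_PiE[of UNIV "\<lambda>_. {1..CARD('n)}"]])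
      (auto simp: bij_betw_def PiE_UNIV_domain)
  show "newt_U \<subseteq> convex hull (newt_vertex ` {\<sigma> :: 'n \<Rightarrow> nat. bij_betw \<sigma> UNIV {1..CARD('n)}})"
    (is "_ \<subseteq> convex hull ?V")
  proof
    fix z :: "real ^ ('n + 'n)"
    assume "z \<in> newt_U"
    then have "\<exists>v\<in>?V. a \<bullet> z \<le> a \<bullet> v" for a
      using newt_U_inner_le_vertex[of z a] by blast
    then show "z \<in> convex hull ?V"
      using finite by (intro mem_convex_hull_if_inner_dominated finite_imageI)
  qed
qed

definition block_shear :: "int \<Rightarrow> int ^ ('n::finite + 'n) ^ ('n + 'n)" where
  "block_shear c = (\<chi> i j. case i of
       Inl a \<Rightarrow> (case j of Inl b \<Rightarrow> if a = b then 1 else 0 | Inr b \<Rightarrow> 0)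
     | Inr a \<Rightarrow> (case j of Inl b \<Rightarrow> if a = b then c else 0 | Inr b \<Rightarrow> if a = b then 1 else 0))"

lemma block_shear_mult: "block_shear c ** block_shear d = block_shear (c + d)"
  by (auto simp: vec_eq_iff matrix_matrix_mult_def block_shear_def
      sum.Plus[of UNIV UNIV, unfolded UNIV_Plus_UNIV] if_distrib[of "\<lambda>x. x * _"]
      cong: if_cong split: sum.split)

lemma block_shear_0: "block_shear 0 = mat 1"
  by (auto simp: vec_eq_iff block_shear_def mat_def split: sum.split)

lemma block_shear_pad_zero:
  "(\<chi> i j. real_of_int (block_shear c $ i $ j)) *v pad_zero x
     = (\<chi> k. case k of Inl i \<Rightarrow> x $ i | Inr i \<Rightarrow> of_int c * x $ i)"
  by (auto simp: vec_eq_iff matrix_vector_mult_def block_shear_def pad_zero_def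
      sum.Plus[of UNIV UNIV, unfolded UNIV_Plus_UNIV] if_distrib[of "\<lambda>x. x * _"]
      if_distrib[of real_of_int] cong: if_cong split: sum.split)

lemma linear_pad_zero: "linear pad_zero"
  by (rule linearI) (auto simp: pad_zero_def vec_eq_iff split: sum.split)

definition newt_offset :: "int ^ ('n::finite + 'n)" where
  "newt_offset = (\<chi> k. case k of Inl _ \<Rightarrow> -1 | Inr _ \<Rightarrow> int CARD('n))"

lemma newt_U_eq_affine_image_permutohedron:
  "(\<lambda>y. (\<chi> i j. real_of_int (block_shear (-1) $ i $ j)) *v y + (\<chi> k. real_of_int (newt_offset $ k)))
     ` pad_zero ` permutohedron = (newt_U :: (real ^ ('n::{finite,linorder} + 'n)) set)"
  (is "?A ` pad_zero ` _ = _")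
proof -
  define bijs where "bijs = {\<sigma> :: 'n \<Rightarrow> nat. bij_betw \<sigma> UNIV {1..CARD('n)}}"
  have vertices: "{x. \<exists>p. bij_betw p UNIV {1..CARD('n)} \<and> x = (\<chi> i. real (p i))}
      = (\<lambda>\<sigma>. \<chi> i. real (\<sigma> i)) ` bijs"
    by (auto simp: bijs_def)
  have "?A (pad_zero (\<chi> i. real (\<sigma> i))) = newt_vertex \<sigma>" if "\<sigma> \<in> bijs" for \<sigma>
    using that by (simp add: newt_offset_def bijs_def block_shear_pad_zero newt_vertex_eq vec_eq_iff
        split: sum.split)
  then have "?A ` pad_zero ` (\<lambda>\<sigma>. \<chi> i. real (\<sigma> i)) ` bijs = newt_vertex ` bijs"
    unfolding image_image by (rule image_cong[OF refl])
  then have "?A ` pad_zero ` permutohedron = convex hull (newt_vertex ` bijs)"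
    unfolding permutohedron_def vertices convex_hull_linear_image[OF linear_pad_zero]
      convex_hull_affine_matrix_image
    by simp
  then show ?thesis
    unfolding bijs_def newt_U_eq_convex_hull_vertices .
qed

theorem mainTheorem3:
  shows "unimod_equiv (pad_zero ` (permutohedron :: (real ^ ('n::{finite,linorder})) set))
                      (newt_U :: (real ^ ('n + 'n)) set)"
  unfolding unimod_equiv_def newt_U_eq_affine_image_permutohedron[symmetric]
  by (intro exI[of _ "block_shear (-1)"] exI[of _ "block_shear 1"] exI[of _ newt_offset])
    (simp add: block_shear_mult block_shear_0)

end
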